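(* Let $b>a>0$ and $\lambda>0$, and let the disruption intensity be $\lambda(t)=0$ for $0\le t\le b$ and $\lambda(t)=\lambda$ for $t>b$. Then $$M_{a,b}(0)=b+\frac{1}{\lambda}\left(e^{\lambda b}-e^{\lambda(b-a)}\right),\qquad M_{b,a}(0)=b+\frac{1}{\lambda}\left(e^{\lambda a}-1\right),$$ and LPT is optimal, i.e. $M_{b,a}(0)<M_{a,b}(0)$.
   Context: Model: a single machine processes a finite batch of tasks one at a time in a fixed order. A task of length $c>0$ requires $c$ units of uninterrupted processing. Disruptions occur at the points of a non-homogeneous Poisson process on $[0,\infty)$ with intensity function $\lambda(t)\ge 0$. If a disruption occurs while a task is being processed, all work on it is lost and that task is restarted from scratch at the disruption time (no repair time); a task is completed once it has been processed for $c$ consecutive time units with no disruption, and the machine then immediately starts the next task. For task lengths $c_1,\dots,c_k$ and $t\ge0$, $M_{c_1,\dots,c_k}(t)$ denotes the expected time, measured from $t$, to complete all tasks in the order $c_1,\dots,c_k$ when processing of $c_1$ starts at time $t$. LPT (longest processing time first) means processing the longer task first. *)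

theory Defs
  imports "HOL-Probability.Probability"
begin

text \<open>Non-homogeneous Poisson process on [0,\<infinity>) with intensity lam, given as a
counting process N t \<omega> (number of disruptions in (0,t]) on a probability space M:
counting paths (start at 0, nondecreasing, right-continuous), independent increments,
and N t - N s Poisson distributed with mean the integral of lam over [s,t].\<close>

definition is_NHPP :: "'a measure \<Rightarrow> (real \<Rightarrow> 'a \<Rightarrow> nat) \<Rightarrow> (real \<Rightarrow> real) \<Rightarrow> bool" where
  "is_NHPP M N lam \<longleftrightarrow>
     prob_space M \<and>
     (\<forall>t\<ge>0. N t \<in> measurable M (count_space UNIV)) \<and>
     (\<forall>\<omega>\<in>space M. N 0 \<omega> = 0 \<and> mono_on {0..} (\<lambda>t. N t \<omega>) \<and>
         (\<forall>t\<ge>0. continuous (at_right t) (\<lambda>s. real (N s \<omega>)))) \<and>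
     (\<forall>s t k. 0 \<le> s \<longrightarrow> s \<le> t \<longrightarrow>
         measure M {\<omega>\<in>space M. N t \<omega> - N s \<omega> = k} =
           exp (- integral {s..t} lam) * (integral {s..t} lam) ^ k / fact k) \<and>
     (\<forall>(n::nat) (ts::nat \<Rightarrow> real). 0 \<le> ts 0 \<longrightarrow> (\<forall>i<n. ts i \<le> ts (Suc i)) \<longrightarrow>
         prob_space.indep_vars M (\<lambda>_. count_space UNIV)
           (\<lambda>i \<omega>. N (ts (Suc i)) \<omega> - N (ts i) \<omega>) {..<n})"

definition next_disr :: "(real \<Rightarrow> nat) \<Rightarrow> real \<Rightarrow> real" where
  "next_disr f u = Inf {s. s > u \<and> f s > f u}"

fun restarts :: "(real \<Rightarrow> nat) \<Rightarrow> real \<Rightarrow> nat \<Rightarrow> real" where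
  "restarts f u 0 = u"
| "restarts f u (Suc n) = next_disr f (restarts f u n)"

definition finish_task :: "(real \<Rightarrow> nat) \<Rightarrow> real \<Rightarrow> real \<Rightarrow> real option" where
  "finish_task f c u =
     (if \<exists>n. f (restarts f u n + c) = f (restarts f u n)
      then Some (restarts f u (LEAST n. f (restarts f u n + c) = f (restarts f u n)) + c)
      else None)"

fun finish_all :: "(real \<Rightarrow> nat) \<Rightarrow> real \<Rightarrow> real list \<Rightarrow> real option" where
  "finish_all f u [] = Some u"
| "finish_all f u (c # cs) =
     (case finish_task f c u of None \<Rightarrow> None | Some v \<Rightarrow> finish_all f v cs)"

definition expected_completion ::
  "'a measure \<Rightarrow> (real \<Rightarrow> 'a \<Rightarrow> nat) \<Rightarrow> real list \<Rightarrow> real \<Rightarrow> ennreal" where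
  "expected_completion M N cs t =
     (\<integral>\<^sup>+ \<omega>. (case finish_all (\<lambda>s. N s \<omega>) t cs of None \<Rightarrow> \<infinity> | Some v \<Rightarrow> ennreal (v - t)) \<partial>M)"

end

theory Submission
  imports Defs "HOL-Real_Asymp.Real_Asymp"
begin

(* No disruption occurs before b, so for tasks u, c with u <= b < u + c the first task ends at u
   and the second at the first time T >= u + c such that (T - c, T] contains no disruption.
   Instead of a strong Markov argument, T is approximated from above by the first such time on the
   grid g + k*h, h = delta / 2^j, where b - g and c are multiples of delta.  Then every grid cell has
   intensity 0 or r, and "the first quiet grid point is k" is the intersection of three events
   depending on disjoint increments.  Independence gives a renewal recursion for the survival
   probabilities of the grid, whence the expected grid time is
   b + exp (r c) (1 - exp (-r (t - b))) h / (1 - exp (-r h)), t the first grid point >= u + c.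
   By right-continuity of the paths the grid times decrease to T, and monotone convergence yields
   E T = b + (exp (r c) - exp (r (b - u))) / r.  For (u, c) = (a, b) and (b, a) this gives the two
   formulas, and LPT wins since exp (r b) - exp (r (b - a)) = exp (r (b - a)) (exp (r a) - 1). *)

section \<open>Monotone sequences of counts\<close>

lemma incseq_eq_iff_steps:
  fixes a :: "nat \<Rightarrow> nat"
  assumes "incseq a" "i \<le> j"
  shows "a j = a i \<longleftrightarrow> (\<forall>l\<in>{i..<j}. a (Suc l) = a l)"
  using assms(2)
proof (induction j rule: dec_induct)
  case (step j)
  have "a i \<le> a j" "a j \<le> a (Suc j)"
    using assms(1) step.hyps(1) by (auto simp: incseq_def)
  then have "a (Suc j) = a i \<longleftrightarrow> a j = a i \<and> a (Suc j) = a j"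
    by auto
  also have "\<dots> \<longleftrightarrow> (\<forall>l\<in>{i..<Suc j}. a (Suc l) = a l)"
    using step by (auto simp: less_Suc_eq)
  finally show ?case .
qed simp

(* A flat window ending in [k - m, k) would contain the jump of a at k - m. *)
lemma first_flat_window_iff:
  fixes a :: "nat \<Rightarrow> nat"
  assumes "incseq a" "1 \<le> m" "m \<le> k0" "k0 < k"
  shows "(\<forall>k'<k. \<not> (k0 \<le> k' \<and> a k' = a (k' - m))) \<and> a k = a (k - m) \<longleftrightarrow>
    (\<forall>k'<k - m. \<not> (k0 \<le> k' \<and> a k' = a (k' - m))) \<and> a (k - m) \<noteq> a (k - m - 1) \<and> a k = a (k - m)"
proof safe
  assume before: "\<forall>k'<k. \<not> (k0 \<le> k' \<and> a k' = a (k' - m))" and flat: "a k = a (k - m)"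
  then show "k' < k - m \<Longrightarrow> k0 \<le> k' \<Longrightarrow> a k' = a (k' - m) \<Longrightarrow> False" for k'
    by auto
  assume "a (k - m) = a (k - m - 1)"
  moreover have "a (k - 1 - m) \<le> a (k - 1)" "a (k - 1) \<le> a k"
    using assms(1) by (auto simp: incseq_def)
  ultimately have "a (k - 1) = a (k - 1 - m)"
    using flat by (simp add: diff_commute)
  moreover have "k - 1 < k" "k0 \<le> k - 1"
    using assms(4) by auto
  ultimately show False
    using before by blast
next
  fix k'
  assume before: "\<forall>k'<k - m. \<not> (k0 \<le> k' \<and> a k' = a (k' - m))"
    and jump: "a (k - m) \<noteq> a (k - m - 1)" and "k' < k" "k0 \<le> k'" "a k' = a (k' - m)"
  show False
  proof (cases "k' < k - m")
    case False
    have "a (k - m - 1) \<le> a (k - m)" "a (k - m) \<le> a k'" "a (k' - m) \<le> a (k - m - 1)"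
      using assms(1,2) False \<open>k' < k\<close> by (auto simp: incseq_def)
    then show False
      using jump \<open>a k' = a (k' - m)\<close> by linarith
  qed (use before \<open>k0 \<le> k'\<close> \<open>a k' = a (k' - m)\<close> in auto)
qed

lemma right_continuous_nat_locally_const:
  fixes f :: "real \<Rightarrow> nat"
  assumes "continuous (at_right t) (\<lambda>s. real (f s))"
  obtains d where "0 < d" "\<And>s. t \<le> s \<Longrightarrow> s < t + d \<Longrightarrow> f s = f t"
proof -
  have "eventually (\<lambda>s. dist (real (f s)) (real (f t)) < 1) (at_right t)"
    using assms by (simp add: continuous_within tendsto_iff)
  then have "eventually (\<lambda>s. f s = f t) (at_right t)"
    by (rule eventually_mono) (auto simp: dist_real_def)
  then obtain b where "t < b" "\<And>s. t < s \<Longrightarrow> s < b \<Longrightarrow> f s = f t"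
    by (auto simp: eventually_at_right_field)
  then show thesis
    by (intro that[of "b - t"]) (auto simp: le_less)
qed

lemma integral_step_intensity:
  fixes b r s t :: real
  assumes "s \<le> t"
  shows "integral {s..t} (\<lambda>x. if x \<le> b then 0 else r) = r * (max t b - max s b)"
proof -
  let ?F = "\<lambda>x. r * max x b"
  have "((\<lambda>x. if x \<le> b then 0 else r) has_integral ?F t - ?F s) {s..t}"
  proof (rule fundamental_theorem_of_calculus_interior_strong[where S = "{b}"])
    show "continuous_on {s..t} ?F"
      by (intro continuous_intros)
    fix x assume x: "x \<in> {s<..<t} - {b}"
    show "(?F has_vector_derivative (if x \<le> b then 0 else r)) (at x)"
    proof (cases "x < b")
      case True
      have "((\<lambda>x. r * b) has_vector_derivative 0) (at x)"
        by (rule derivative_eq_intros) auto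
      then have "(?F has_vector_derivative 0) (at x)"
        by (rule has_vector_derivative_transform_within_open[where S = "{..<b}"]) (use True in auto)
      then show ?thesis
        using True by simp
    next
      case False
      then have "b < x" using x by auto
      have "((\<lambda>x. r * x) has_vector_derivative r) (at x)"
        using DERIV_cmult[OF DERIV_ident, of r x]
        by (simp add: has_real_derivative_iff_has_vector_derivative)
      then have "(?F has_vector_derivative r) (at x)"
        by (rule has_vector_derivative_transform_within_open[where S = "{b<..}"]) (use \<open>b < x\<close> in auto)
      then show ?thesis
        using \<open>b < x\<close> by simp
    qed
  qed (use assms in auto)
  then show ?thesis
    by (simp add: integral_unique right_diff_distrib)
qed

lemma tendsto_div_one_minus_exp:
  fixes r :: real
  assumes "0 < r"
  shows "((\<lambda>x. x / (1 - exp (- (r * x)))) \<longlongrightarrow> 1 / r) (at_right 0)"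
proof -
  have "((\<lambda>x. x / (1 - exp (- (r * x)))) \<longlongrightarrow> inverse r) (at_right 0)"
    using assms by real_asymp
  then show ?thesis
    by (simp add: inverse_eq_divide)
qed

lemma nn_integral_decreasing_limit:
  fixes X :: "nat \<Rightarrow> 'a \<Rightarrow> ennreal"
  assumes X: "\<And>j. X j \<in> borel_measurable M"
    and lim: "AE \<omega> in M. decseq (\<lambda>j. X j \<omega>) \<and> (\<lambda>j. X j \<omega>) \<longlonglongrightarrow> Y \<omega>"
    and int: "\<And>j. (\<integral>\<^sup>+\<omega>. X j \<omega> \<partial>M) = ennreal (v j)"
    and v: "v \<longlonglongrightarrow> V"
  shows "(\<integral>\<^sup>+\<omega>. Y \<omega> \<partial>M) = ennreal V"
proof -
  have dec: "AE \<omega> in M. X (Suc j) \<omega> \<le> X j \<omega>" for j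
    using lim by eventually_elim (simp add: decseq_Suc_iff)
  have "AE \<omega> in M. Y \<omega> = (INF j. X j \<omega>)"
    using lim by eventually_elim (metis LIMSEQ_INF LIMSEQ_unique)
  then have "(\<integral>\<^sup>+\<omega>. Y \<omega> \<partial>M) = (\<integral>\<^sup>+\<omega>. (INF j. X j \<omega>) \<partial>M)"
    by (rule nn_integral_cong_AE)
  also have "\<dots> = (INF j. ennreal (v j))"
    using dec X by (subst nn_integral_monotone_convergence_INF_AE') (simp_all add: int)
  also have "\<dots> = ennreal V"
  proof (rule LIMSEQ_unique)
    have "ennreal (v (Suc j)) \<le> ennreal (v j)" for j
      unfolding int[symmetric] using dec by (rule nn_integral_mono_AE)
    then show "(\<lambda>j. ennreal (v j)) \<longlonglongrightarrow> (INF j. ennreal (v j))"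
      by (intro LIMSEQ_INF) (simp add: decseq_Suc_iff)
    show "(\<lambda>j. ennreal (v j)) \<longlonglongrightarrow> ennreal V"
      using v by (rule tendsto_ennrealI)
  qed
  finally show ?thesis .
qed

lemma sets_PiM_count_space_finite:
  assumes "finite I" "A \<subseteq> space (Pi\<^sub>M I (\<lambda>_. count_space (UNIV :: 'b :: countable set)))"
  shows "A \<in> sets (Pi\<^sub>M I (\<lambda>_. count_space (UNIV :: 'b set)))"
proof -
  have "countable A"
    using assms by (intro countable_subset[OF _ countable_PiE]) (auto simp: space_PiM)
  moreover have "{x} \<in> sets (Pi\<^sub>M I (\<lambda>_. count_space (UNIV :: 'b set)))" if "x \<in> A" for x
  proof -
    have "x \<in> Pi\<^sub>E I (\<lambda>_. UNIV)"
      using that assms(2) by (auto simp: space_PiM)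
    then have "{x} = Pi\<^sub>E I (\<lambda>i. {x i})"
      by (auto simp: PiE_iff extensional_def fun_eq_iff) (metis)
    then show ?thesis
      using assms(1) by (simp add: sets_PiM_I_finite)
  qed
  ultimately have "(\<Union>x\<in>A. {x}) \<in> sets (Pi\<^sub>M I (\<lambda>_. count_space (UNIV :: 'b set)))"
    by (intro sets.countable_UN') auto
  then show ?thesis
    by simp
qed

lemma (in prob_space) prob_indep_vars_three_blocks:
  fixes X :: "nat \<Rightarrow> 'a \<Rightarrow> 'b :: countable"
  assumes ind: "indep_vars (\<lambda>_. count_space UNIV) X {..<Suc (Suc i)}"
  shows "prob {\<omega>\<in>space M. \<Phi> (restrict (\<lambda>l. X l \<omega>) {..<i}) \<and> P (X i \<omega>) \<and> Q (X (Suc i) \<omega>)} =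
    prob {\<omega>\<in>space M. \<Phi> (restrict (\<lambda>l. X l \<omega>) {..<i})} *
    prob {\<omega>\<in>space M. P (X i \<omega>)} * prob {\<omega>\<in>space M. Q (X (Suc i) \<omega>)}"
proof -
  define K where "K j = (if j = 0 then {..<i} else if j = 1 then {i} else {Suc i})" for j :: nat
  define B where "B j = (if j = 0 then {x. \<Phi> x} else if j = 1 then {x. P (x i)} else {x. Q (x (Suc i))})
    \<inter> space (Pi\<^sub>M (K j) (\<lambda>_. count_space UNIV))" for j :: nat
  let ?Y = "\<lambda>j \<omega>. restrict (\<lambda>l. X l \<omega>) (K j)"
  have indep: "indep_vars (\<lambda>j. Pi\<^sub>M (K j) (\<lambda>_. count_space UNIV)) ?Y {0, 1, 2}"
    by (rule indep_vars_restrict[OF ind]) (auto simp: K_def disjoint_family_on_def)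
  have "B j \<in> sets (Pi\<^sub>M (K j) (\<lambda>_. count_space UNIV))" for j
    by (rule sets_PiM_count_space_finite) (auto simp: B_def K_def)
  then have "prob (\<Inter>j\<in>{0, 1, 2}. ?Y j -` B j \<inter> space M) = (\<Prod>j\<in>{0, 1, 2}. prob (?Y j -` B j \<inter> space M))"
    by (intro indep_varsD[OF indep]) auto
  moreover have pre: "?Y 0 -` B 0 \<inter> space M = {\<omega>\<in>space M. \<Phi> (restrict (\<lambda>l. X l \<omega>) {..<i})}"
    "?Y 1 -` B 1 \<inter> space M = {\<omega>\<in>space M. P (X i \<omega>)}"
    "?Y 2 -` B 2 \<inter> space M = {\<omega>\<in>space M. Q (X (Suc i) \<omega>)}"
    by (auto simp: B_def K_def space_PiM)
  moreover have "(\<Inter>j\<in>{0, 1, 2}. ?Y j -` B j \<inter> space M) =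
      {\<omega>\<in>space M. \<Phi> (restrict (\<lambda>l. X l \<omega>) {..<i}) \<and> P (X i \<omega>) \<and> Q (X (Suc i) \<omega>)}"
    unfolding INT_insert INT_empty pre by auto
  ultimately show ?thesis
    by (simp add: mult.assoc)
qed

section \<open>Completion times on a counting path\<close>

(* f counts disruptions, so quiet_end f u c t says that the window (t - c, t] is free of
   disruptions and lies after u: a task of length c, started at u or later, can end at t. *)
definition quiet_end :: "(real \<Rightarrow> nat) \<Rightarrow> real \<Rightarrow> real \<Rightarrow> real \<Rightarrow> bool" where
  "quiet_end f u c t \<longleftrightarrow> u + c \<le> t \<and> f t = f (t - c)"

(* Only meaningful if some grid point g + k * h is a quiet end; otherwise LEAST is arbitrary. *)
definition grid_quiet_end :: "(real \<Rightarrow> nat) \<Rightarrow> real \<Rightarrow> real \<Rightarrow> real \<Rightarrow> real \<Rightarrow> real" where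
  "grid_quiet_end f u c g h = g + real (LEAST k. quiet_end f u c (g + real k * h)) * h"

lemma grid_quiet_end_quiet:
  "\<exists>k. quiet_end f u c (g + real k * h) \<Longrightarrow> quiet_end f u c (grid_quiet_end f u c g h)"
  unfolding grid_quiet_end_def by (rule LeastI_ex)

lemma grid_quiet_end_le:
  assumes "0 \<le> h" "quiet_end f u c (g + real k * h)"
  shows "grid_quiet_end f u c g h \<le> g + real k * h"
  unfolding grid_quiet_end_def using assms by (simp add: Least_le mult_right_mono)

lemma grid_quiet_end_half_le:
  assumes "0 \<le> h" "\<exists>k. quiet_end f u c (g + real k * h)"
  shows "grid_quiet_end f u c g (h / 2) \<le> grid_quiet_end f u c g h"
proof -
  define k where "k = (LEAST k. quiet_end f u c (g + real k * h))"
  have k: "grid_quiet_end f u c g h = g + real (2 * k) * (h / 2)"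
    by (simp add: grid_quiet_end_def k_def)
  have "quiet_end f u c (g + real (2 * k) * (h / 2))"
    using grid_quiet_end_quiet[OF assms(2)] by (simp only: k)
  then have "grid_quiet_end f u c g (h / 2) \<le> g + real (2 * k) * (h / 2)"
    using assms(1) by (intro grid_quiet_end_le) auto
  then show ?thesis
    by (simp only: k)
qed

lemma grid_quiet_end_dyadic_decseq:
  assumes "0 < \<delta>" "\<And>j. \<exists>k. quiet_end f u c (g + real k * (\<delta> / 2 ^ j))"
  shows "decseq (\<lambda>j. grid_quiet_end f u c g (\<delta> / 2 ^ j))"
proof (rule decseq_SucI)
  fix j
  have "\<delta> / 2 ^ Suc j = (\<delta> / 2 ^ j) / 2"
    by simp
  then have "grid_quiet_end f u c g (\<delta> / 2 ^ Suc j) = grid_quiet_end f u c g ((\<delta> / 2 ^ j) / 2)"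
    by (simp only:)
  also have "\<dots> \<le> grid_quiet_end f u c g (\<delta> / 2 ^ j)"
    using assms by (intro grid_quiet_end_half_le) simp_all
  finally show "grid_quiet_end f u c g (\<delta> / 2 ^ Suc j) \<le> grid_quiet_end f u c g (\<delta> / 2 ^ j)" .
qed

locale counting_path =
  fixes f :: "real \<Rightarrow> nat"
  assumes mono: "mono_on {0..} f"
    and right_cont: "\<And>t. 0 \<le> t \<Longrightarrow> continuous (at_right t) (\<lambda>s. real (f s))"
begin

lemma monoD: "0 \<le> x \<Longrightarrow> x \<le> y \<Longrightarrow> f x \<le> f y"
  using mono by (auto simp: mono_on_def)

lemma next_disr_bounds:
  assumes "0 \<le> v" "v < w" "f v < f w"
  shows "v < next_disr f v" and "next_disr f v \<le> w"
    and "\<And>s. v \<le> s \<Longrightarrow> s < next_disr f v \<Longrightarrow> f s = f v"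
proof -
  define D where "D = {s. v < s \<and> f v < f s}"
  have nd: "next_disr f v = Inf D"
    by (simp add: next_disr_def D_def)
  have "w \<in> D" and bdd: "bdd_below D"
    using assms by (auto simp: D_def intro!: bdd_belowI[of _ v])
  then show "next_disr f v \<le> w"
    unfolding nd by (rule cInf_lower)
  obtain d where "0 < d" and d: "\<And>s. v \<le> s \<Longrightarrow> s < v + d \<Longrightarrow> f s = f v"
    using right_continuous_nat_locally_const[OF right_cont[OF assms(1)]] by blast
  have "v + d \<le> Inf D"
  proof (rule cInf_greatest)
    fix x assume "x \<in> D"
    then have "v < x" "f v < f x"
      by (auto simp: D_def)
    then show "v + d \<le> x"
      using d[of x] by fastforce
  qed (use \<open>w \<in> D\<close> in blast)
  with \<open>0 < d\<close> show "v < next_disr f v"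
    unfolding nd by linarith
  show "f s = f v" if "v \<le> s" "s < next_disr f v" for s
  proof (rule ccontr)
    assume "f s \<noteq> f v"
    with monoD[OF assms(1) \<open>v \<le> s\<close>] \<open>v \<le> s\<close> have "s \<in> D"
      by (auto simp: D_def le_less)
    then have "Inf D \<le> s"
      using bdd by (rule cInf_lower)
    with that show False
      unfolding nd by simp
  qed
qed

lemma next_disr_jump:
  assumes "0 \<le> v" "v < w" "f v < f w"
  shows "f v < f (next_disr f v)"
proof -
  define D where "D = {s. v < s \<and> f v < f s}"
  have nd: "next_disr f v = Inf D"
    by (simp add: next_disr_def D_def)
  have "w \<in> D" and bdd: "bdd_below D"
    using assms by (auto simp: D_def intro!: bdd_belowI[of _ v])
  have "0 \<le> Inf D"
    using next_disr_bounds(1)[OF assms] assms(1) unfolding nd by simp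
  obtain d where "0 < d" and d: "\<And>s. Inf D \<le> s \<Longrightarrow> s < Inf D + d \<Longrightarrow> f s = f (Inf D)"
    using right_continuous_nat_locally_const[OF right_cont[OF \<open>0 \<le> Inf D\<close>]] by blast
  then obtain s where "s \<in> D" "s < Inf D + d"
    using cInf_less_iff[OF _ bdd, of "Inf D + d"] \<open>w \<in> D\<close> by auto
  moreover have "Inf D \<le> s"
    using \<open>s \<in> D\<close> bdd by (rule cInf_lower)
  ultimately show ?thesis
    using d[of s] unfolding nd by (simp add: D_def)
qed

lemma restarts_while_disrupted:
  assumes "0 \<le> u" "0 < c" "quiet_end f u c t"
    and "\<forall>k<n. f (restarts f u k + c) \<noteq> f (restarts f u k)"
  shows "u \<le> restarts f u n \<and> restarts f u n \<le> t - c \<and> f u + n \<le> f (restarts f u n)"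
  using assms(4)
proof (induction n)
  case (Suc n)
  let ?R = "restarts f u n"
  have IH: "u \<le> ?R" "?R \<le> t - c" "f u + n \<le> f ?R"
    using Suc by auto
  have "0 \<le> ?R"
    using IH assms(1) by linarith
  have disrupted: "f ?R < f (?R + c)"
    using monoD[OF \<open>0 \<le> ?R\<close>, of "?R + c"] Suc.prems assms(2) by fastforce
  note nd = next_disr_bounds[OF \<open>0 \<le> ?R\<close> _ disrupted]
    and jump = next_disr_jump[OF \<open>0 \<le> ?R\<close> _ disrupted]
  have "next_disr f ?R \<le> t - c"
  proof (rule ccontr)
    assume "\<not> ?thesis"
    then have "f (t - c) = f ?R"
      using nd(3)[of "t - c"] IH assms(2) by auto
    moreover have "f (next_disr f ?R) \<le> f t"
      using nd(1,2) assms(2) IH \<open>0 \<le> ?R\<close> by (intro monoD) auto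
    ultimately show False
      using jump assms(2,3) by (auto simp: quiet_end_def)
  qed
  then show ?case
    using nd(1) jump assms(2) IH by auto
qed (use assms in \<open>auto simp: quiet_end_def\<close>)

lemma finish_task_quiet_end:
  assumes "0 \<le> u" "0 < c" "quiet_end f u c t"
  obtains T where "finish_task f c u = Some T" "T \<le> t" "quiet_end f u c T"
proof -
  let ?R = "restarts f u"
  have ex: "\<exists>n. f (?R n + c) = f (?R n)"
  proof (rule ccontr)
    assume "\<not> ?thesis"
    then have "f u + Suc (f (t - c)) \<le> f (?R (Suc (f (t - c))))"
        and "u \<le> ?R (Suc (f (t - c)))" "?R (Suc (f (t - c))) \<le> t - c"
      using restarts_while_disrupted[OF assms] by blast+
    moreover have "f (?R (Suc (f (t - c)))) \<le> f (t - c)"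
      using calculation assms(1) by (intro monoD) auto
    ultimately show False
      by linarith
  qed
  define n where "n = (LEAST n. f (?R n + c) = f (?R n))"
  have "f (?R n + c) = f (?R n)"
    unfolding n_def using ex by (rule LeastI_ex)
  moreover have "u \<le> ?R n" "?R n \<le> t - c"
    using restarts_while_disrupted[OF assms, of n] not_less_Least unfolding n_def by blast+
  moreover have "finish_task f c u = Some (?R n + c)"
    using ex by (simp add: finish_task_def n_def)
  ultimately show thesis
    by (intro that) (auto simp: quiet_end_def)
qed

lemma finish_task_le_quiet_end:
  assumes "0 \<le> u" "0 < c" "finish_task f c u = Some T" "quiet_end f u c t"
  shows "T \<le> t"
  using finish_task_quiet_end[OF assms(1,2,4)] assms(3) by force

lemma finish_task_undisrupted:
  assumes "0 \<le> u" "0 < c" "f (u + c) = f u"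
  shows "finish_task f c u = Some (u + c)"
proof -
  have "quiet_end f u c (u + c)"
    using assms(3) by (simp add: quiet_end_def)
  then obtain T where "finish_task f c u = Some T" "T \<le> u + c" "quiet_end f u c T"
    using finish_task_quiet_end[OF assms(1,2)] by blast
  then show ?thesis
    by (simp add: quiet_end_def)
qed

lemma grid_quiet_end_less:
  assumes "quiet_end f u c T" "0 \<le> u" "0 < c" "g \<le> T"
  obtains d where "0 < d" "\<And>h. 0 < h \<Longrightarrow> h < d \<Longrightarrow> grid_quiet_end f u c g h < T + h"
proof -
  have "0 \<le> T"
    using assms by (auto simp: quiet_end_def)
  obtain d where "0 < d" and d: "\<And>s. T \<le> s \<Longrightarrow> s < T + d \<Longrightarrow> f s = f T"
    using right_continuous_nat_locally_const[OF right_cont[OF \<open>0 \<le> T\<close>]] by blast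
  have "grid_quiet_end f u c g h < T + h" if "0 < h" "h < d" for h
  proof -
    define k where "k = nat \<lceil>(T - g) / h\<rceil>"
    define t where "t = g + real k * h"
    have "(T - g) / h \<le> real k" "real k < (T - g) / h + 1"
      using assms(4) \<open>0 < h\<close> by (auto simp: k_def) linarith
    then have "T \<le> t" "t < T + h"
      using \<open>0 < h\<close> by (auto simp: t_def field_simps)
    then have "f t = f T"
      using d[of t] \<open>h < d\<close> by simp
    have "0 \<le> T - c"
      using assms(1,2) by (simp add: quiet_end_def)
    then have "f (T - c) \<le> f (t - c)" "f (t - c) \<le> f t"
      using \<open>T \<le> t\<close> \<open>0 < c\<close> by (simp_all add: monoD)
    with \<open>f t = f T\<close> have "quiet_end f u c t"
      using assms(1) \<open>T \<le> t\<close> by (auto simp: quiet_end_def)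
    then have "grid_quiet_end f u c g h \<le> t"
      unfolding t_def using \<open>0 < h\<close> by (intro grid_quiet_end_le) auto
    with \<open>t < T + h\<close> show ?thesis
      by linarith
  qed
  with \<open>0 < d\<close> show thesis
    by (rule that)
qed

lemma grid_quiet_end_tendsto_finish_task:
  assumes "0 \<le> u" "g \<le> u" "0 < c" "0 < \<delta>"
    and quiet: "\<And>j. \<exists>k. quiet_end f u c (g + real k * (\<delta> / 2 ^ j))"
  obtains T where "finish_task f c u = Some T" and "u + c \<le> T"
    and "(\<lambda>j. grid_quiet_end f u c g (\<delta> / 2 ^ j)) \<longlonglongrightarrow> T"
proof -
  let ?G = "\<lambda>j. grid_quiet_end f u c g (\<delta> / 2 ^ j)"
  obtain T where T: "finish_task f c u = Some T" "quiet_end f u c T"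
    using finish_task_quiet_end[OF assms(1,3) grid_quiet_end_quiet[OF quiet[of 0]]] by metis
  then have "u + c \<le> T" "g \<le> T"
    using assms(2,3) by (auto simp: quiet_end_def)
  obtain d where "0 < d" and upper: "\<And>h. 0 < h \<Longrightarrow> h < d \<Longrightarrow> grid_quiet_end f u c g h < T + h"
    using grid_quiet_end_less[OF T(2) assms(1,3) \<open>g \<le> T\<close>] by blast
  have step_lim: "(\<lambda>j. \<delta> / 2 ^ j) \<longlonglongrightarrow> 0"
    by (rule LIMSEQ_divide_realpow_zero) simp
  have "?G \<longlonglongrightarrow> T"
  proof (rule tendsto_sandwich[where f = "\<lambda>_. T" and h = "\<lambda>j. T + \<delta> / 2 ^ j"])
    show "eventually (\<lambda>j. T \<le> ?G j) sequentially"
      using finish_task_le_quiet_end[OF assms(1,3) T(1) grid_quiet_end_quiet[OF quiet]] by simp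
    show "eventually (\<lambda>j. ?G j \<le> T + \<delta> / 2 ^ j) sequentially"
      using order_tendstoD(2)[OF step_lim \<open>0 < d\<close>]
    proof eventually_elim
      case (elim j)
      then show ?case
        using upper[of "\<delta> / 2 ^ j"] assms(4) by simp
    qed
    show "(\<lambda>j. T + \<delta> / 2 ^ j) \<longlonglongrightarrow> T"
      using tendsto_add[OF tendsto_const step_lim, of T] by simp
  qed simp
  with T(1) \<open>u + c \<le> T\<close> show thesis
    by (rule that)
qed

end

section \<open>The Poisson process with step intensity\<close>

locale step_NHPP =
  fixes M :: "'a measure" and N :: "real \<Rightarrow> 'a \<Rightarrow> nat" and b r :: real
  assumes NHPP: "is_NHPP M N (\<lambda>t. if t \<le> b then 0 else r)" and r_pos: "0 < r"
begin

sublocale prob_space M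
  using NHPP by (simp add: is_NHPP_def)

lemma N_measurable: "0 \<le> t \<Longrightarrow> N t \<in> measurable M (count_space UNIV)"
  using NHPP by (simp add: is_NHPP_def)

lemma counting_path: "\<omega> \<in> space M \<Longrightarrow> counting_path (\<lambda>s. N s \<omega>)"
  using NHPP unfolding is_NHPP_def counting_path_def by auto

lemma N_mono: "\<omega> \<in> space M \<Longrightarrow> 0 \<le> s \<Longrightarrow> s \<le> t \<Longrightarrow> N s \<omega> \<le> N t \<omega>"
  using counting_path.monoD[OF counting_path] by blast

lemma indep_increments:
  assumes "0 \<le> ts 0" "\<And>i. i < n \<Longrightarrow> ts i \<le> ts (Suc i)"
  shows "indep_vars (\<lambda>_. count_space UNIV) (\<lambda>i \<omega>. N (ts (Suc i)) \<omega> - N (ts i) \<omega>) {..<n}"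
  using NHPP assms unfolding is_NHPP_def by blast

lemma sets_no_disruption:
  assumes "0 \<le> s" "0 \<le> t"
  shows "{\<omega>\<in>space M. N t \<omega> = N s \<omega>} \<in> sets M"
proof -
  have "{\<omega>\<in>space M. N t \<omega> = N s \<omega>} = (\<Union>n. (N t -` {n} \<inter> space M) \<inter> (N s -` {n} \<inter> space M))"
    by auto
  also have "\<dots> \<in> sets M"
    using measurable_sets[OF N_measurable] assms by (intro sets.countable_UN) auto
  finally show ?thesis .
qed

lemma prob_no_disruption:
  assumes "0 \<le> s" "s \<le> t"
  shows "prob {\<omega>\<in>space M. N t \<omega> = N s \<omega>} = exp (- (r * (max t b - max s b)))"
proof -
  have "{\<omega>\<in>space M. N t \<omega> = N s \<omega>} = {\<omega>\<in>space M. N t \<omega> - N s \<omega> = 0}"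
    using N_mono assms by fastforce
  also have "prob \<dots> = exp (- integral {s..t} (\<lambda>t. if t \<le> b then 0 else r)) *
      integral {s..t} (\<lambda>t. if t \<le> b then 0 else r) ^ 0 / fact 0"
    using NHPP assms unfolding is_NHPP_def by blast
  finally show ?thesis
    using integral_step_intensity[OF assms(2)] by simp
qed

lemma prob_disruption:
  assumes "0 \<le> s" "s \<le> t"
  shows "prob {\<omega>\<in>space M. N t \<omega> \<noteq> N s \<omega>} = 1 - exp (- (r * (max t b - max s b)))"
proof -
  have "{\<omega>\<in>space M. N t \<omega> \<noteq> N s \<omega>} = space M - {\<omega>\<in>space M. N t \<omega> = N s \<omega>}"
    by auto
  then show ?thesis
    using prob_compl[OF sets_no_disruption] prob_no_disruption assms by simp
qed

lemma prob_increments_three_blocks: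
  fixes ts :: "nat \<Rightarrow> real"
  assumes "0 \<le> ts 0" "\<And>l. l \<le> i \<Longrightarrow> ts l \<le> ts (Suc l)" "ts (Suc i) \<le> t"
  shows "prob {\<omega>\<in>space M. \<Phi> (\<lambda>l\<in>{..<i}. N (ts (Suc l)) \<omega> - N (ts l) \<omega>) \<and>
      N (ts (Suc i)) \<omega> \<noteq> N (ts i) \<omega> \<and> N t \<omega> = N (ts (Suc i)) \<omega>} =
    prob {\<omega>\<in>space M. \<Phi> (\<lambda>l\<in>{..<i}. N (ts (Suc l)) \<omega> - N (ts l) \<omega>)} *
    prob {\<omega>\<in>space M. N (ts (Suc i)) \<omega> \<noteq> N (ts i) \<omega>} * prob {\<omega>\<in>space M. N t \<omega> = N (ts (Suc i)) \<omega>}"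
proof -
  define ts' where "ts' l = (if l \<le> Suc i then ts l else t)" for l
  define X where "X l \<omega> = N (ts' (Suc l)) \<omega> - N (ts' l) \<omega>" for l \<omega>
  have mono: "ts' l \<le> ts' (Suc l)" if "l \<le> Suc i" for l
    using assms(2,3) that by (auto simp: ts'_def le_Suc_eq)
  have "0 \<le> ts' l" if "l \<le> Suc i" for l
    using that
  proof (induction l)
    case (Suc l)
    then show ?case
      using mono[of l] by simp
  qed (simp add: ts'_def assms(1))
  then have N_le: "N (ts' l) \<omega> \<le> N (ts' (Suc l)) \<omega>" if "\<omega> \<in> space M" "l \<le> Suc i" for l \<omega>
    using N_mono[OF that(1) _ mono] that(2) by simp
  have "indep_vars (\<lambda>_. count_space UNIV) X {..<Suc (Suc i)}"
    unfolding X_def using mono by (intro indep_increments) (auto simp: ts'_def assms(1))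
  note blocks = prob_indep_vars_three_blocks[OF this, where \<Phi> = \<Phi> and P = "\<lambda>n. n \<noteq> 0" and Q = "\<lambda>n. n = 0"]
  have "restrict (\<lambda>l. X l \<omega>) {..<i} = (\<lambda>l\<in>{..<i}. N (ts (Suc l)) \<omega> - N (ts l) \<omega>)" for \<omega>
    by (auto simp: X_def ts'_def)
  moreover have "X i \<omega> \<noteq> 0 \<longleftrightarrow> N (ts (Suc i)) \<omega> \<noteq> N (ts i) \<omega>"
    and "X (Suc i) \<omega> = 0 \<longleftrightarrow> N t \<omega> = N (ts (Suc i)) \<omega>" if "\<omega> \<in> space M" for \<omega>
    using N_le[OF that, of i] N_le[OF that, of "Suc i"] by (auto simp: X_def ts'_def)
  ultimately show ?thesis
    using blocks by (simp cong: conj_cong)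
qed

lemma AE_no_disruption_before:
  assumes "0 \<le> t" "t \<le> b"
  shows "AE \<omega> in M. N t \<omega> = N 0 \<omega>"
proof -
  have "prob {\<omega>\<in>space M. N t \<omega> = N 0 \<omega>} = 1"
    using prob_no_disruption[OF order_refl assms(1)] assms by (simp add: max_def)
  then show ?thesis
    using prob_Collect_eq_1[OF sets_no_disruption[OF order_refl assms(1)]] by simp
qed

end

section \<open>Discretisation on a grid\<close>

(* As b is a grid point and c a multiple of h, every grid cell has intensity either 0 or r. *)
locale quiet_grid = step_NHPP +
  fixes g h u c :: real and m L :: nat
  assumes g_nonneg: "0 \<le> g" and g_le_u: "g \<le> u" and u_le_b: "u \<le> b" and b_less: "b < u + c"
    and h_pos: "0 < h" and c_eq: "c = real m * h" and b_eq: "b = g + real L * h"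
begin

definition tg :: "nat \<Rightarrow> real" where
  "tg k = g + real k * h"

definition quiet :: "nat \<Rightarrow> 'a \<Rightarrow> bool" where
  "quiet k \<omega> \<longleftrightarrow> quiet_end (\<lambda>s. N s \<omega>) u c (tg k)"

definition k0 :: nat where
  "k0 = (LEAST k. u + c \<le> tg k)"

definition pending :: "nat \<Rightarrow> 'a set" where
  "pending j = {\<omega>\<in>space M. \<forall>k<j. \<not> quiet k \<omega>}"

definition surv :: "nat \<Rightarrow> real" where
  "surv j = prob (pending j)"

lemma tg_nonneg: "0 \<le> tg k"
  using g_nonneg h_pos by (simp add: tg_def)

lemma tg_mono: "k \<le> l \<Longrightarrow> tg k \<le> tg l"
  using h_pos by (simp add: tg_def mult_right_mono)

lemma tg_diff: "k \<le> l \<Longrightarrow> tg l - tg k = real (l - k) * h"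
  by (simp add: tg_def algebra_simps)

lemma tg_L: "tg L = b"
  by (simp add: tg_def b_eq)

lemma m_pos: "1 \<le> m"
  using c_eq h_pos b_less u_le_b by (cases m) auto

lemma le_k0_iff: "k0 \<le> k \<longleftrightarrow> u + c \<le> tg k"
proof
  have "\<exists>k. u + c \<le> tg k"
    using tg_L b_less u_le_b tg_diff[of L "L + m"] c_eq by (intro exI[of _ "L + m"]) simp
  then have "u + c \<le> tg k0"
    unfolding k0_def by (rule LeastI_ex)
  then show "k0 \<le> k \<Longrightarrow> u + c \<le> tg k"
    using tg_mono by (meson order_trans)
qed (simp add: k0_def Least_le)

lemma k0_bounds: "L \<le> k0" "m \<le> k0" "k0 \<le> L + m"
proof -
  have "u + c \<le> tg k0"
    using le_k0_iff[of k0] by simp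
  then have "real L * h \<le> real k0 * h" "real m * h \<le> real k0 * h"
    using b_less g_le_u by (auto simp: tg_def b_eq c_eq)
  then show "L \<le> k0" "m \<le> k0"
    using h_pos by (simp_all add: mult_le_cancel_right_pos)
  have "tg (L + m) = b + c"
    by (simp add: tg_def b_eq c_eq algebra_simps)
  then show "k0 \<le> L + m"
    using le_k0_iff u_le_b by simp
qed

lemma tg_k0: "u + c \<le> tg k0" "tg k0 < u + c + h"
proof -
  show "u + c \<le> tg k0"
    using le_k0_iff[of k0] by simp
  have "0 < k0"
    using k0_bounds(2) m_pos by simp
  then have "\<not> k0 \<le> k0 - 1"
    by simp
  then have "tg (k0 - 1) < u + c"
    using le_k0_iff[of "k0 - 1"] by simp
  then show "tg k0 < u + c + h"
    using tg_diff[of "k0 - 1" k0] \<open>0 < k0\<close> by simp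
qed

lemma quiet_iff: "quiet k \<omega> \<longleftrightarrow> k0 \<le> k \<and> N (tg k) \<omega> = N (tg (k - m)) \<omega>"
proof -
  have "tg k - c = tg (k - m)" if "k0 \<le> k"
    using that k0_bounds(2) by (simp add: tg_def c_eq algebra_simps)
  then show ?thesis
    by (auto simp: quiet_def quiet_end_def le_k0_iff)
qed

lemma N_grid_incseq: "\<omega> \<in> space M \<Longrightarrow> incseq (\<lambda>k. N (tg k) \<omega>)"
  unfolding incseq_def using N_mono tg_nonneg tg_mono by blast

lemma sets_quiet: "{\<omega>\<in>space M. quiet k \<omega>} \<in> sets M"
  unfolding quiet_iff using sets_no_disruption[OF tg_nonneg tg_nonneg] by auto

lemma sets_pending: "pending j \<in> sets M"
proof -
  have "pending j = space M - (\<Union>k<j. {\<omega>\<in>space M. quiet k \<omega>})"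
    by (auto simp: pending_def)
  then show ?thesis
    using sets_quiet by auto
qed

lemma surv_nonneg: "0 \<le> surv j"
  by (simp add: surv_def)

lemma surv_eq_1: "j \<le> k0 \<Longrightarrow> surv j = 1"
  by (auto simp: surv_def pending_def quiet_iff prob_space intro!: arg_cong[where f = prob])

lemma surv_Suc_k0: "surv (Suc k0) = 1 - exp (- (r * (tg k0 - b)))"
proof -
  have "pending (Suc k0) = {\<omega>\<in>space M. N (tg k0) \<omega> \<noteq> N (tg (k0 - m)) \<omega>}"
    by (auto simp: pending_def quiet_iff less_Suc_eq)
  moreover have "max (tg k0) b = tg k0" "max (tg (k0 - m)) b = b"
    using tg_k0(1) b_less tg_mono[of "k0 - m" L] k0_bounds tg_L by auto
  ultimately show ?thesis
    using prob_disruption[OF tg_nonneg tg_mono[of "k0 - m" k0]] by (simp add: surv_def)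
qed

lemma pending_iff_increments:
  assumes "\<omega> \<in> space M"
  shows "\<omega> \<in> pending j \<longleftrightarrow> (\<forall>k<j. k0 \<le> k \<longrightarrow> (\<exists>l\<in>{k - m..<k}. N (tg (Suc l)) \<omega> \<noteq> N (tg l) \<omega>))"
  using assms incseq_eq_iff_steps[OF N_grid_incseq[OF assms], of "k - m" k for k]
  by (auto simp: pending_def quiet_iff)

lemma pending_diff_eq:
  assumes "k0 < k"
  shows "pending k - pending (Suc k) = {\<omega>\<in>space M. \<omega> \<in> pending (k - m) \<and>
    N (tg (k - m)) \<omega> \<noteq> N (tg (k - m - 1)) \<omega> \<and> N (tg k) \<omega> = N (tg (k - m)) \<omega>}"
proof (intro set_eqI)
  fix \<omega>
  show "\<omega> \<in> pending k - pending (Suc k) \<longleftrightarrow> \<omega> \<in> {\<omega>\<in>space M. \<omega> \<in> pending (k - m) \<and>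
    N (tg (k - m)) \<omega> \<noteq> N (tg (k - m - 1)) \<omega> \<and> N (tg k) \<omega> = N (tg (k - m)) \<omega>}"
  proof (cases "\<omega> \<in> space M")
    case True
    have "\<omega> \<in> pending k - pending (Suc k) \<longleftrightarrow>
        (\<forall>k'<k. \<not> (k0 \<le> k' \<and> N (tg k') \<omega> = N (tg (k' - m)) \<omega>)) \<and> N (tg k) \<omega> = N (tg (k - m)) \<omega>"
      using True assms by (auto simp: pending_def quiet_iff less_Suc_eq)
    also have "\<dots> \<longleftrightarrow> (\<forall>k'<k - m. \<not> (k0 \<le> k' \<and> N (tg k') \<omega> = N (tg (k' - m)) \<omega>)) \<and>
        N (tg (k - m)) \<omega> \<noteq> N (tg (k - m - 1)) \<omega> \<and> N (tg k) \<omega> = N (tg (k - m)) \<omega>"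
      by (rule first_flat_window_iff[OF N_grid_incseq[OF True] m_pos k0_bounds(2) assms])
    finally show ?thesis
      using True by (auto simp: pending_def quiet_iff)
  qed (auto simp: pending_def)
qed

lemma prob_pending_diff:
  assumes "k0 < k"
  shows "prob (pending k - pending (Suc k)) = surv (k - m) *
    prob {\<omega>\<in>space M. N (tg (k - m)) \<omega> \<noteq> N (tg (k - m - 1)) \<omega>} *
    prob {\<omega>\<in>space M. N (tg k) \<omega> = N (tg (k - m)) \<omega>}"
proof -
  define i where "i = k - m - 1"
  have i: "k - m = Suc i" "k - m - 1 = i"
    using assms k0_bounds(2) m_pos by (simp_all add: i_def)
  define \<Phi> where "\<Phi> x \<longleftrightarrow> (\<forall>k'<Suc i. k0 \<le> k' \<longrightarrow> (\<exists>l\<in>{k' - m..<k'}. x l \<noteq> (0::nat)))" for x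
  have pending_eq: "\<omega> \<in> pending (Suc i) \<longleftrightarrow> \<Phi> (\<lambda>l\<in>{..<i}. N (tg (Suc l)) \<omega> - N (tg l) \<omega>)"
    if "\<omega> \<in> space M" for \<omega>
  proof -
    have "(\<lambda>l\<in>{..<i}. N (tg (Suc l)) \<omega> - N (tg l) \<omega>) l \<noteq> 0 \<longleftrightarrow> N (tg (Suc l)) \<omega> \<noteq> N (tg l) \<omega>"
      if "k' < Suc i" "l \<in> {k' - m..<k'}" for k' l
    proof -
      have "l < i"
        using that by auto
      then show ?thesis
        using incseq_SucD[OF N_grid_incseq[OF \<open>\<omega> \<in> space M\<close>], of l] by auto
    qed
    then show ?thesis
      unfolding pending_iff_increments[OF that] \<Phi>_def by blast
  qed
  have diff_eq: "pending k - pending (Suc k) = {\<omega>\<in>space M. \<Phi> (\<lambda>l\<in>{..<i}. N (tg (Suc l)) \<omega> - N (tg l) \<omega>) \<and>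
      N (tg (Suc i)) \<omega> \<noteq> N (tg i) \<omega> \<and> N (tg k) \<omega> = N (tg (Suc i)) \<omega>}"
    using pending_eq unfolding pending_diff_eq[OF assms] i(1) diff_Suc_1 by blast
  have pending_Suc_i: "pending (Suc i) = {\<omega>\<in>space M. \<Phi> (\<lambda>l\<in>{..<i}. N (tg (Suc l)) \<omega> - N (tg l) \<omega>)}"
    using pending_eq sets.sets_into_space[OF sets_pending] by blast
  have "Suc i \<le> k"
    using i(1) by simp
  then show ?thesis
    unfolding diff_eq surv_def i(1) diff_Suc_1 pending_Suc_i
    by (intro prob_increments_three_blocks tg_nonneg tg_mono) simp_all
qed

lemma surv_diff:
  assumes "k0 < k"
  shows "surv k - surv (Suc k) = surv (k - m) *
    (1 - exp (- (r * (max (tg (k - m)) b - max (tg (k - m - 1)) b)))) *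
    exp (- (r * (max (tg k) b - max (tg (k - m)) b)))"
proof -
  have "pending (Suc k) \<subseteq> pending k"
    by (auto simp: pending_def)
  then have "surv k - surv (Suc k) = prob (pending k - pending (Suc k))"
    unfolding surv_def by (rule finite_measure_Diff[OF sets_pending sets_pending, symmetric])
  also have "\<dots> = surv (k - m) *
      prob {\<omega>\<in>space M. N (tg (k - m)) \<omega> \<noteq> N (tg (k - m - 1)) \<omega>} *
      prob {\<omega>\<in>space M. N (tg k) \<omega> = N (tg (k - m)) \<omega>}"
    by (rule prob_pending_diff[OF assms])
  finally show ?thesis
    unfolding prob_disruption[OF tg_nonneg tg_mono[of "k - m - 1" "k - m"], OF diff_le_self]
      prob_no_disruption[OF tg_nonneg tg_mono[of "k - m" k], OF diff_le_self] .
qed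

definition beta :: real where
  "beta = (1 - exp (- (r * h))) * exp (- (r * c))"

lemma beta_pos: "0 < beta"
  using r_pos h_pos by (simp add: beta_def)

lemma surv_flat: "k0 < k \<Longrightarrow> k \<le> L + m \<Longrightarrow> surv (Suc k) = surv k"
  using surv_diff[of k] tg_mono[of "k - m" L] tg_mono[of "k - m - 1" L] tg_L by simp

lemma surv_diff_beyond: "L + m < k \<Longrightarrow> surv k - surv (Suc k) = beta * surv (k - m)"
proof -
  assume k: "L + m < k"
  then have "b \<le> tg (k - m - 1)" "b \<le> tg (k - m)" "b \<le> tg k"
    using tg_mono tg_L by auto
  moreover have "tg (k - m) - tg (k - m - 1) = h" "tg k - tg (k - m) = c"
    using tg_diff[of "k - m - 1" "k - m"] tg_diff[of "k - m" k] k by (auto simp: c_eq)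
  ultimately show ?thesis
    using surv_diff[of k] k k0_bounds(3) by (simp add: beta_def max_def mult_ac)
qed

lemma surv_Suc_L_m: "surv (Suc (L + m)) = surv (Suc k0)"
  using k0_bounds(3)
proof (induction rule: dec_induct)
  case (step n)
  then show ?case
    using surv_flat[of "Suc n"] by simp
qed simp

lemma beta_times_partial_sum:
  "beta * (\<Sum>i<n. surv (Suc L + i)) = surv (Suc k0) - surv (Suc (L + m) + n)"
proof (induction n)
  case (Suc n)
  have "surv (Suc (L + m) + n) - surv (Suc (Suc (L + m) + n)) = beta * surv (Suc L + n)"
    using surv_diff_beyond[of "Suc (L + m) + n"] by simp
  with Suc show ?case
    by (simp add: algebra_simps)
qed (simp add: surv_Suc_L_m)

lemma summable_surv_tail: "summable (\<lambda>i. surv (Suc L + i))"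
proof (rule summableI_nonneg_bounded)
  fix n
  have "beta * (\<Sum>i<n. surv (Suc L + i)) \<le> surv (Suc k0)"
    using beta_times_partial_sum surv_nonneg by simp
  then show "(\<Sum>i<n. surv (Suc L + i)) \<le> surv (Suc k0) / beta"
    using beta_pos by (simp add: field_simps)
qed (rule surv_nonneg)

lemma surv_tendsto_0: "surv \<longlonglongrightarrow> 0"
  using summable_LIMSEQ_zero[OF summable_surv_tail] by (simp add: LIMSEQ_offset[where k = "Suc L"] add.commute)

lemma suminf_surv_tail: "(\<Sum>i. surv (Suc L + i)) = surv (Suc k0) / beta"
proof (rule LIMSEQ_unique[OF summable_LIMSEQ[OF summable_surv_tail]])
  have "(\<lambda>n. surv (Suc (L + m) + n)) \<longlonglongrightarrow> 0"
    using LIMSEQ_ignore_initial_segment[OF surv_tendsto_0, of "Suc (L + m)"] by (simp add: add.commute)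
  then have "(\<lambda>n. (surv (Suc k0) - surv (Suc (L + m) + n)) / beta) \<longlonglongrightarrow> surv (Suc k0) / beta"
    using beta_pos by (auto intro!: tendsto_eq_intros)
  moreover have "(surv (Suc k0) - surv (Suc (L + m) + n)) / beta = (\<Sum>i<n. surv (Suc L + i))" for n
    using beta_times_partial_sum[of n] beta_pos by (simp add: field_simps)
  ultimately show "(\<lambda>n. \<Sum>i<n. surv (Suc L + i)) \<longlonglongrightarrow> surv (Suc k0) / beta"
    by simp
qed

lemma summable_surv: "summable (\<lambda>j. surv (Suc j))"
  using summable_surv_tail summable_iff_shift[of "\<lambda>j. surv (Suc j)" L] by (simp add: add.commute)

lemma suminf_surv: "(\<Sum>j. surv (Suc j)) = real L + surv (Suc k0) / beta"
proof -
  have "(\<Sum>j. surv (Suc j)) = (\<Sum>i. surv (Suc L + i)) + (\<Sum>j<L. surv (Suc j))"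
    using summable_surv by (subst suminf_split_initial_segment[of _ L]) (simp_all add: add.commute)
  also have "(\<Sum>j<L. surv (Suc j)) = real L"
    using k0_bounds(1) by (simp add: surv_eq_1)
  finally show ?thesis
    using suminf_surv_tail by simp
qed

lemma AE_quiet: "AE \<omega> in M. \<exists>k. quiet k \<omega>"
proof (rule AE_I')
  have "{\<omega>\<in>space M. \<forall>k. \<not> quiet k \<omega>} = (\<Inter>j. pending j)"
    by (auto simp: pending_def)
  also have "\<dots> \<in> null_sets M"
  proof -
    have "prob (\<Inter>j. pending j) \<le> surv j" for j
      unfolding surv_def using sets_pending by (intro finite_measure_mono) auto
    then have "prob (\<Inter>j. pending j) \<le> 0"
      using surv_tendsto_0 by (intro LIMSEQ_le_const) auto
    then show ?thesis
      using sets_pending by (auto simp: null_sets_def emeasure_eq_measure measure_le_0_iff)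
  qed
  finally show "{\<omega>\<in>space M. \<not> (\<exists>k. quiet k \<omega>)} \<in> null_sets M"
    by simp
qed auto

lemma measurable_first_quiet: "(\<lambda>\<omega>. LEAST k. quiet k \<omega>) \<in> measurable M (count_space UNIV)"
  using sets_quiet by (intro measurable_Least) (simp add: pred_def)

lemma pending_Suc_iff_less_first_quiet:
  assumes "\<omega> \<in> space M" "quiet k \<omega>"
  shows "\<omega> \<in> pending (Suc j) \<longleftrightarrow> j < (LEAST k. quiet k \<omega>)"
proof
  assume "\<omega> \<in> pending (Suc j)"
  then have "\<not> quiet (LEAST k. quiet k \<omega>) \<omega>" if "(LEAST k. quiet k \<omega>) < Suc j"
    using that by (simp add: pending_def)
  with LeastI[of "\<lambda>k. quiet k \<omega>", OF assms(2)] show "j < (LEAST k. quiet k \<omega>)"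
    by linarith
next
  assume "j < (LEAST k. quiet k \<omega>)"
  then have "\<not> quiet k \<omega>" if "k < Suc j" for k
    using that by (intro not_less_Least) simp
  then show "\<omega> \<in> pending (Suc j)"
    using assms(1) by (simp add: pending_def)
qed

lemma nn_integral_first_quiet:
  "(\<integral>\<^sup>+\<omega>. of_nat (LEAST k. quiet k \<omega>) \<partial>M) = ennreal (real L + surv (Suc k0) / beta)"
proof -
  have "AE \<omega> in M. (of_nat (LEAST k. quiet k \<omega>) :: ennreal) = (\<Sum>j. indicator (pending (Suc j)) \<omega>)"
    using AE_quiet AE_space
  proof eventually_elim
    case (elim \<omega>)
    then obtain k where "quiet k \<omega>"
      by blast
    then have "(\<Sum>j. indicator (pending (Suc j)) \<omega> :: ennreal) = (\<Sum>j<(LEAST k. quiet k \<omega>). 1)"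
      using pending_Suc_iff_less_first_quiet[OF elim(2)]
      by (subst suminf_finite[of "{..<LEAST k. quiet k \<omega>}"]) auto
    then show ?case
      by simp
  qed
  then have "(\<integral>\<^sup>+\<omega>. of_nat (LEAST k. quiet k \<omega>) \<partial>M) = (\<integral>\<^sup>+\<omega>. (\<Sum>j. indicator (pending (Suc j)) \<omega>) \<partial>M)"
    by (rule nn_integral_cong_AE)
  also have "\<dots> = (\<Sum>j. \<integral>\<^sup>+\<omega>. indicator (pending (Suc j)) \<omega> \<partial>M)"
    by (rule nn_integral_suminf) (rule borel_measurable_indicator[OF sets_pending])
  also have "\<dots> = (\<Sum>j. ennreal (surv (Suc j)))"
    by (simp add: surv_def emeasure_eq_measure sets_pending)
  also have "\<dots> = ennreal (\<Sum>j. surv (Suc j))"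
    by (rule suminf_ennreal2[OF _ summable_surv]) (rule surv_nonneg)
  finally show ?thesis
    by (simp add: suminf_surv)
qed

lemma borel_measurable_grid_quiet_end:
  "(\<lambda>\<omega>. ennreal (grid_quiet_end (\<lambda>s. N s \<omega>) u c g h)) \<in> borel_measurable M"
proof -
  have "(\<lambda>k. ennreal (tg k)) \<in> measurable (count_space UNIV) borel"
    by simp
  from measurable_compose[OF measurable_first_quiet this] show ?thesis
    by (simp add: grid_quiet_end_def quiet_def tg_def comp_def)
qed

lemma nn_integral_grid_quiet_end:
  "(\<integral>\<^sup>+\<omega>. ennreal (grid_quiet_end (\<lambda>s. N s \<omega>) u c g h) \<partial>M) =
    ennreal (b + exp (r * c) * (1 - exp (- (r * (tg k0 - b)))) * (h / (1 - exp (- (r * h)))))"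
proof -
  have "ennreal (grid_quiet_end (\<lambda>s. N s \<omega>) u c g h) = ennreal g + ennreal h * of_nat (LEAST k. quiet k \<omega>)" for \<omega>
    using g_nonneg h_pos
    by (simp add: grid_quiet_end_def quiet_def tg_def ennreal_mult' mult.commute flip: ennreal_of_nat_eq_real_of_nat)
  then have "(\<integral>\<^sup>+\<omega>. ennreal (grid_quiet_end (\<lambda>s. N s \<omega>) u c g h) \<partial>M) =
      ennreal g + ennreal h * ennreal (real L + surv (Suc k0) / beta)"
    using measurable_first_quiet
    by (simp add: nn_integral_add nn_integral_cmult emeasure_space_1 nn_integral_first_quiet)
  also have "\<dots> = ennreal (g + h * (real L + surv (Suc k0) / beta))"
    using g_nonneg h_pos beta_pos surv_nonneg by (simp add: ennreal_mult)
  also have "g + h * (real L + surv (Suc k0) / beta) =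
      b + exp (r * c) * (1 - exp (- (r * (tg k0 - b)))) * (h / (1 - exp (- (r * h))))"
    using h_pos r_pos by (simp add: b_eq surv_Suc_k0 beta_def exp_minus field_simps)
  finally show ?thesis .
qed

end

section \<open>Dyadic refinement\<close>

lemma dyadic_grid_origin:
  fixes u b c :: real
  assumes "0 < u" "u \<le> b" "0 < c"
  obtains g n J where "0 \<le> g" "g \<le> u" "b = g + real n * (c / 2 ^ J)"
proof -
  obtain J :: nat where "c / u < 2 ^ J"
    using real_arch_pow[of 2 "c / u"] by auto
  then have "c / 2 ^ J < u"
    using assms by (simp add: field_simps)
  define \<delta> where "\<delta> = c / 2 ^ J"
  define n where "n = nat \<lceil>(b - u) / \<delta>\<rceil>"
  have "0 < \<delta>"
    using assms by (simp add: \<delta>_def)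
  have "(b - u) / \<delta> \<le> real n" "real n < (b - u) / \<delta> + 1"
    using assms \<open>0 < \<delta>\<close> by (auto simp: n_def) linarith
  then have "b - u \<le> real n * \<delta>" "real n * \<delta> < b - u + \<delta>"
    using \<open>0 < \<delta>\<close> by (auto simp: field_simps)
  then show thesis
    using \<open>c / 2 ^ J < u\<close> by (intro that[of "b - real n * \<delta>" n J]) (auto simp: \<delta>_def)
qed

locale dyadic_grids = step_NHPP +
  fixes u c g \<delta> :: real and p n :: nat
  assumes u_pos: "0 < u" and u_le_b: "u \<le> b" and b_less: "b < u + c"
    and g_nonneg: "0 \<le> g" and g_le_u: "g \<le> u" and \<delta>_pos: "0 < \<delta>"
    and c_eq: "c = real p * \<delta>" and b_eq: "b = g + real n * \<delta>"
begin

lemma c_pos: "0 < c"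
  using u_le_b b_less by simp

abbreviation grid_end :: "nat \<Rightarrow> 'a \<Rightarrow> real" where
  "grid_end j \<omega> \<equiv> grid_quiet_end (\<lambda>s. N s \<omega>) u c g (\<delta> / 2 ^ j)"

definition first_grid_point :: "nat \<Rightarrow> real" where
  "first_grid_point j = g + real (LEAST k. u + c \<le> g + real k * (\<delta> / 2 ^ j)) * (\<delta> / 2 ^ j)"

lemma quiet_grid_at: "quiet_grid M N b r g (\<delta> / 2 ^ j) u c (p * 2 ^ j) (n * 2 ^ j)"
  using u_le_b b_less g_nonneg g_le_u \<delta>_pos
  by unfold_locales (simp_all add: c_eq b_eq)

lemma first_grid_point_eq: "first_grid_point j = quiet_grid.tg g (\<delta> / 2 ^ j) (quiet_grid.k0 g (\<delta> / 2 ^ j) u c)"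
proof -
  interpret G: quiet_grid M N b r g "\<delta> / 2 ^ j" u c "p * 2 ^ j" "n * 2 ^ j"
    by (rule quiet_grid_at)
  show ?thesis
    by (simp add: G.tg_def G.k0_def first_grid_point_def)
qed

lemma nn_integral_grid_end:
  "(\<integral>\<^sup>+\<omega>. ennreal (grid_end j \<omega>) \<partial>M) = ennreal (b + exp (r * c) *
    (1 - exp (- (r * (first_grid_point j - b)))) * ((\<delta> / 2 ^ j) / (1 - exp (- (r * (\<delta> / 2 ^ j))))))"
proof -
  interpret G: quiet_grid M N b r g "\<delta> / 2 ^ j" u c "p * 2 ^ j" "n * 2 ^ j"
    by (rule quiet_grid_at)
  show ?thesis
    unfolding first_grid_point_eq by (rule G.nn_integral_grid_quiet_end)
qed

lemma first_grid_point_bounds: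
  "u + c \<le> first_grid_point j" "first_grid_point j < u + c + \<delta> / 2 ^ j"
proof -
  interpret G: quiet_grid M N b r g "\<delta> / 2 ^ j" u c "p * 2 ^ j" "n * 2 ^ j"
    by (rule quiet_grid_at)
  show "u + c \<le> first_grid_point j" "first_grid_point j < u + c + \<delta> / 2 ^ j"
    unfolding first_grid_point_eq by (fact G.tg_k0)+
qed

lemma first_grid_point_tendsto: "first_grid_point \<longlonglongrightarrow> u + c"
proof (rule tendsto_sandwich[where f = "\<lambda>_. u + c" and h = "\<lambda>j. u + c + \<delta> / 2 ^ j"])
  show "(\<lambda>j. u + c + \<delta> / 2 ^ j) \<longlonglongrightarrow> u + c"
    using tendsto_add[OF tendsto_const LIMSEQ_divide_realpow_zero[of 2 \<delta>]] by simp
qed (use first_grid_point_bounds in \<open>auto intro!: always_eventually less_imp_le\<close>)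

lemma AE_grid_end_decreasing_to_completion:
  "AE \<omega> in M. decseq (\<lambda>j. ennreal (grid_end j \<omega>)) \<and> (\<lambda>j. ennreal (grid_end j \<omega>)) \<longlonglongrightarrow>
    (case finish_all (\<lambda>s. N s \<omega>) 0 [u, c] of None \<Rightarrow> \<infinity> | Some v \<Rightarrow> ennreal (v - 0))"
proof -
  have "AE \<omega> in M. \<forall>j. \<exists>k. quiet_end (\<lambda>s. N s \<omega>) u c (g + real k * (\<delta> / 2 ^ j))"
  proof (subst AE_all_countable, intro allI)
    fix j
    interpret G: quiet_grid M N b r g "\<delta> / 2 ^ j" u c "p * 2 ^ j" "n * 2 ^ j"
      by (rule quiet_grid_at)
    show "AE \<omega> in M. \<exists>k. quiet_end (\<lambda>s. N s \<omega>) u c (g + real k * (\<delta> / 2 ^ j))"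
      using G.AE_quiet by (simp add: G.quiet_def G.tg_def)
  qed
  moreover have "AE \<omega> in M. N u \<omega> = N 0 \<omega>"
    using u_pos u_le_b by (intro AE_no_disruption_before) auto
  ultimately show ?thesis
    using AE_space
  proof eventually_elim
    case (elim \<omega>)
    interpret counting_path "\<lambda>s. N s \<omega>"
      using elim(3) by (rule counting_path)
    have "finish_task (\<lambda>s. N s \<omega>) u 0 = Some u"
      using finish_task_undisrupted[of 0 u] elim(2) u_pos by simp
    moreover obtain T where "finish_task (\<lambda>s. N s \<omega>) c u = Some T" "u + c \<le> T"
      and "(\<lambda>j. grid_end j \<omega>) \<longlonglongrightarrow> T"
      using grid_quiet_end_tendsto_finish_task[OF less_imp_le[OF u_pos] g_le_u c_pos \<delta>_pos elim(1)[rule_format]]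
      by blast
    moreover have "decseq (\<lambda>j. grid_end j \<omega>)"
      using \<delta>_pos elim(1) by (intro grid_quiet_end_dyadic_decseq) auto
    ultimately show ?case
      by (auto simp: decseq_def ennreal_leI)
  qed
qed

lemma expected_completion_eq:
  "expected_completion M N [u, c] 0 = ennreal (b + (exp (r * c) - exp (r * (b - u))) / r)"
  unfolding expected_completion_def
proof (rule nn_integral_decreasing_limit)
  show "(\<lambda>\<omega>. ennreal (grid_end j \<omega>)) \<in> borel_measurable M" for j
  proof -
    interpret G: quiet_grid M N b r g "\<delta> / 2 ^ j" u c "p * 2 ^ j" "n * 2 ^ j"
      by (rule quiet_grid_at)
    show ?thesis
      by (rule G.borel_measurable_grid_quiet_end)
  qed
  have "filterlim (\<lambda>j. \<delta> / 2 ^ j) (at_right 0) sequentially"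
    using LIMSEQ_divide_realpow_zero[of 2 \<delta>] \<delta>_pos by (intro tendsto_imp_filterlim_at_right) auto
  then have "(\<lambda>j. b + exp (r * c) * (1 - exp (- (r * (first_grid_point j - b)))) *
      ((\<delta> / 2 ^ j) / (1 - exp (- (r * (\<delta> / 2 ^ j)))))) \<longlonglongrightarrow>
      b + exp (r * c) * (1 - exp (- (r * (u + c - b)))) * (1 / r)"
    by (intro tendsto_intros first_grid_point_tendsto filterlim_compose[OF tendsto_div_one_minus_exp[OF r_pos]])
  moreover have "exp (r * c) * (1 - exp (- (r * (u + c - b)))) = exp (r * c) - exp (r * (b - u))"
    by (simp add: right_diff_distrib flip: exp_add) (simp add: algebra_simps)
  ultimately show "(\<lambda>j. b + exp (r * c) * (1 - exp (- (r * (first_grid_point j - b)))) *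
      ((\<delta> / 2 ^ j) / (1 - exp (- (r * (\<delta> / 2 ^ j)))))) \<longlonglongrightarrow> b + (exp (r * c) - exp (r * (b - u))) / r"
    by simp
qed (use AE_grid_end_decreasing_to_completion nn_integral_grid_end in auto)

end

context step_NHPP
begin

lemma expected_completion_two_tasks:
  assumes "0 < u" "u \<le> b" "b < u + c"
  shows "expected_completion M N [u, c] 0 = ennreal (b + (exp (r * c) - exp (r * (b - u))) / r)"
proof -
  have "0 < c"
    using assms by simp
  obtain g n J where "0 \<le> g" "g \<le> u" "b = g + real n * (c / 2 ^ J)"
    using dyadic_grid_origin[OF assms(1,2) \<open>0 < c\<close>] by blast
  then interpret dyadic_grids M N b r u c g "c / 2 ^ J" "2 ^ J" n
    using assms \<open>0 < c\<close> by unfold_locales simp_all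
  show ?thesis
    by (rule expected_completion_eq)
qed

end

lemma LPT_gain:
  fixes a b r :: real
  assumes "0 < a" "a < b" "0 < r"
  shows "exp (r * a) - 1 < exp (r * b) - exp (r * (b - a))"
proof -
  have "exp (r * b) - exp (r * (b - a)) = exp (r * (b - a)) * (exp (r * a) - 1)"
    by (simp add: algebra_simps flip: exp_add)
  moreover have "1 < exp (r * (b - a))" "0 < exp (r * a) - 1"
    using assms by simp_all
  ultimately show ?thesis
    by simp
qed

theorem proposition1:
  fixes a b r :: real and M :: "'a measure" and N :: "real \<Rightarrow> 'a \<Rightarrow> nat"
  assumes "0 < a" and "a < b" and "0 < r"
    and "is_NHPP M N (\<lambda>t. if t \<le> b then 0 else r)"
  shows "expected_completion M N [a, b] 0 = ennreal (b + (exp (r * b) - exp (r * (b - a))) / r)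
       \<and> expected_completion M N [b, a] 0 = ennreal (b + (exp (r * a) - 1) / r)
       \<and> expected_completion M N [b, a] 0 < expected_completion M N [a, b] 0"
proof -
  interpret step_NHPP M N b r
    using assms(3,4) by unfold_locales
  have ab: "expected_completion M N [a, b] 0 = ennreal (b + (exp (r * b) - exp (r * (b - a))) / r)"
    using expected_completion_two_tasks[of a b] assms(1,2) by simp
  have ba: "expected_completion M N [b, a] 0 = ennreal (b + (exp (r * a) - 1) / r)"
    using expected_completion_two_tasks[of b a] assms(1,2) by simp
  have "b + (exp (r * a) - 1) / r < b + (exp (r * b) - exp (r * (b - a))) / r"
    using LPT_gain[OF assms(1-3)] assms(3) by (simp add: divide_strict_right_mono)
  moreover have "0 < b + (exp (r * a) - 1) / r"
    using assms by (simp add: add_pos_nonneg)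
  ultimately have "ennreal (b + (exp (r * a) - 1) / r) < ennreal (b + (exp (r * b) - exp (r * (b - a))) / r)"
    by (intro ennreal_lessI) simp_all
  with ab ba show ?thesis
    by simp
qed

end
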